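(* Let $T\le T'$ be positive integers, $f:\mathbb{R}^{T'}\to\mathbb{R}$ differentiable with $\mathrm{prog}(\nabla f(x))\le\mathrm{prog}(x)+1$ for all $x$, $0<\tau_1\le\dots\le\tau_n$, $p\in(0,1]$, $\mathcal{D}_i=\mathrm{Bernoulli}(p)$ and $O_i=O^G_{\tau_i}$ for all $i\in[n]$, where $$[G(x;\xi)]_j=\nabla_jf(x)\Big(1+\mathbb{1}[j>\mathrm{prog}(x)]\Big(\frac\xi p-1\Big)\Big),\quad x\in\mathbb{R}^{T'},\ \xi\in\{0,1\},\ j\in[T'],$$ and let $A$ be a zero-respecting algorithm run in the time multiple oracles protocol on $\mathbb{R}^{T'}$. Then for every $\delta\in(0,1]$ and every $t\ge0$ with $$t\le\frac1{24}\min_{m\in[n]}\left[\Big(\sum_{i=1}^m\frac1{\tau_i}\Big)^{-1}\Big(\frac1p+m\Big)\right]\Big(\frac T2+\log\delta\Big),$$ with probability at least $1-\delta$ we have $\mathrm{prog}(x^k)<T$ for all $k\in S_t$.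
   Context: $\mathrm{prog}(x)=\max\{i\ge0: x_i\ne0\}$ with the convention $x_0\equiv1$ (so $\mathrm{prog}(0)=0$). Time multiple oracles protocol. There are $n$ oracles $O_1,\dots,O_n$ with distributions $\mathcal{D}_1,\dots,\mathcal{D}_n$ on a sample space $\mathbb{S}_\xi$. An algorithm is a sequence $A=\{A^k\}_{k\ge0}$ with $A^0\in\mathbb{R}_{\ge0}\times[n]\times\mathbb{R}^d$ and $A^k:(\mathbb{R}^d)^k\to\mathbb{R}_{\ge0}\times[n]\times\mathbb{R}^d$ for $k\ge1$, such that for all $k\ge1$ and all $g^1,\dots,g^k$ the first (time) component of $A^k(g^1,\dots,g^k)$ is at least the first component of $A^{k-1}(g^1,\dots,g^{k-1})$. Each oracle $i$ has a state in $\mathbb{R}_{\ge0}\times\mathbb{R}^d\times\{0,1\}$, initially $s_i^0=(0,0,0)$. Set $t^0=0$. For $k=0,1,2,\dots$: $(t^{k+1},i^{k+1},x^k)=A^k(g^1,\dots,g^k)$ ($=A^0$ for $k=0$); draw $\xi^{k+1}\sim\mathcal{D}_{i^{k+1}}$ independently of everything before; $(s^{k+1}_{i^{k+1}},g^{k+1})=O_{i^{k+1}}(t^{k+1},x^k,s^k_{i^{k+1}},\xi^{k+1})$, and $s^{k+1}_j=s^k_j$ for $j\ne i^{k+1}$. For $t\ge0$, $S_t=\{k\in\mathbb{N}_0: t^k\le t\}$. Delayed oracle. For $\tau>0$ and a mapping $G:\mathbb{R}^d\times\mathbb{S}_\xi\to\mathbb{R}^d$, the oracle $O^G_\tau(t,x,(s_t,s_x,s_q),\xi)$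 returns $((t,x,1),0)$ if $s_q=0$; $((s_t,s_x,1),0)$ if $s_q=1$ and $t<s_t+\tau$; $((0,0,0),G(s_x;\xi))$ if $s_q=1$ and $t\ge s_t+\tau$. Zero-respecting: $\mathrm{supp}(x^k)\subseteq\bigcup_{j=1}^k\mathrm{supp}(g^j)$ for all $k\in\mathbb{N}_0$ and all realizations, where $\mathrm{supp}(x)=\{i:x_i\ne0\}$. *)

theory Defs
  imports "HOL-Analysis.Analysis" "HOL-Probability.Probability"
begin

text \<open>Coordinates of R^{T'} are indexed by a finite linearly ordered type 'n with
  CARD('n) = T'; coordinate j is the (idx j)-th coordinate, idx j in {1..T'}.\<close>

definition idx :: "'n::{finite,linorder} \<Rightarrow> nat" where
  "idx j = card {i. i \<le> j}"

definition supp :: "real ^ 'n \<Rightarrow> 'n set" where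
  "supp x = {j. x $ j \<noteq> 0}"

definition prog :: "real ^ ('n::{finite,linorder}) \<Rightarrow> nat" where
  "prog x = Max (insert 0 (idx ` supp x))"

text \<open>Delayed oracle O^G_tau; oracle state (s_t, s_x, s_q) with s_q encoded as bool.\<close>
definition delayed_oracle ::
  "real \<Rightarrow> ('v::zero \<Rightarrow> 'x \<Rightarrow> 'v) \<Rightarrow> real \<Rightarrow> 'v \<Rightarrow> real \<times> 'v \<times> bool \<Rightarrow> 'x
     \<Rightarrow> (real \<times> 'v \<times> bool) \<times> 'v" where
  "delayed_oracle \<tau> G t x s \<xi> =
     (case s of (st, sx, sq) \<Rightarrow>
        if \<not> sq then ((t, x, True), 0)
        else if t < st + \<tau> then ((st, sx, True), 0)
        else ((0, 0, False), G sx \<xi>))"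

text \<open>The algorithm is A k [g^1,...,g^k]
  (meaningful only on lists of length k). Samples: \<xi>^{k+1} = \<omega> k.
  run ... k = ([g^1,...,g^k], oracle states s^k).\<close>
primrec run ::
  "(nat \<Rightarrow> 'v list \<Rightarrow> real \<times> nat \<times> 'v) \<Rightarrow> (nat \<Rightarrow> real \<Rightarrow> 'v \<Rightarrow> 's \<Rightarrow> 'x \<Rightarrow> 's \<times> 'v)
    \<Rightarrow> 's \<Rightarrow> (nat \<Rightarrow> 'x) \<Rightarrow> nat \<Rightarrow> 'v list \<times> (nat \<Rightarrow> 's)" where
  "run A Or s0 \<omega> 0 = ([], (\<lambda>_. s0))"
| "run A Or s0 \<omega> (Suc k) =
     (case run A Or s0 \<omega> k of (gs, s) \<Rightarrow>
       (case A k gs of (t', i, x) \<Rightarrow>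
         (case Or i t' x (s i) (\<omega> k) of (s', g) \<Rightarrow> (gs @ [g], s(i := s')))))"

definition grads where "grads A Or s0 \<omega> k = fst (run A Or s0 \<omega> k)"

definition proto_time where
  "proto_time A Or s0 \<omega> k = (if k = 0 then 0 else fst (A (k - 1) (grads A Or s0 \<omega> (k - 1))))"

definition proto_point where
  "proto_point A Or s0 \<omega> k = snd (snd (A k (grads A Or s0 \<omega> k)))"

definition is_algorithm :: "nat \<Rightarrow> (nat \<Rightarrow> 'v list \<Rightarrow> real \<times> nat \<times> 'v) \<Rightarrow> bool" where
  "is_algorithm n A \<longleftrightarrow>
     (\<forall>k gs. length gs = k \<longrightarrow> 0 \<le> fst (A k gs) \<and> fst (snd (A k gs)) \<in> {1..n}) \<and>
     (\<forall>k gs. length gs = Suc k \<longrightarrow> fst (A k (take k gs)) \<le> fst (A (Suc k) gs))"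

definition Gmap :: "(real ^ ('n::{finite,linorder}) \<Rightarrow> real ^ ('n::{finite,linorder})) \<Rightarrow> real \<Rightarrow> real ^ ('n::{finite,linorder}) \<Rightarrow> bool \<Rightarrow> real ^ ('n::{finite,linorder})" where
  "Gmap grad p x \<xi> = (\<chi> j. grad x $ j *
       (1 + (if idx j > prog x then of_bool \<xi> / p - 1 else 0)))"

end

theory Submission
  imports Defs
begin

(* Only a query that collects a stochastic gradient computed at a point of maximal progress can
   raise the progress, by one and only if its coin is 1: the algorithm is zero-respecting,
   prog (grad x) <= prog x + 1, and a zero coin erases every coordinate beyond prog x.
   Cut the run into phases between consecutive increases of the progress. If N computations that
   started and ended inside a phase have been collected, worker j contributed at most Delta / tau j
   of them, so the phase lasted Delta >= min 1 (p N) * t0 / 2 with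
   t0 = min_m (sum_{i<=m} 1 / tau i)^-1 (1/p + m).
   The potential exp (-12 * sum of min 1 (p N) over the finished phases) * rho ^ (missing progress)
   * psi (N of the current phase) is a supermartingale in the coins, so reaching progress T by time t,
   which forces that sum to be at most 2 t / t0, has probability at most rho ^ T * exp (24 t / t0),
   and this is at most delta. *)

section \<open>Progress\<close>

lemma prog_le_iff: "prog v \<le> m \<longleftrightarrow> (\<forall>j. v $ j \<noteq> 0 \<longrightarrow> idx j \<le> m)"
  unfolding prog_def supp_def by (auto simp: Max_le_iff)

lemma idx_le_prog: "v $ j \<noteq> 0 \<Longrightarrow> idx j \<le> prog v"
  unfolding prog_def supp_def by (intro Max_ge) auto

lemma prog_zero [simp]: "prog (0 :: real ^ 'n::{finite,linorder}) = 0"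
  unfolding prog_def supp_def by simp

lemma prog_Gmap_le_Suc:
  assumes "prog (grad x) \<le> prog x + 1"
  shows "prog (Gmap grad p x \<xi>) \<le> Suc (prog x)"
  unfolding prog_le_iff
proof (intro allI impI)
  fix j assume "Gmap grad p x \<xi> $ j \<noteq> 0"
  then have "idx j \<le> prog (grad x)" by (intro idx_le_prog) (auto simp: Gmap_def)
  with assms show "idx j \<le> Suc (prog x)" by simp
qed

lemma prog_Gmap_False_le: "prog (Gmap grad p x False) \<le> prog x"
  unfolding prog_le_iff by (auto simp: Gmap_def split: if_splits)

definition max_prog :: "(real ^ 'n::{finite,linorder}) list \<Rightarrow> nat" where
  "max_prog gs = Max (insert 0 (prog ` set gs))"

lemma max_prog_Nil [simp]: "max_prog [] = 0"
  unfolding max_prog_def by simp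

lemma max_prog_snoc: "max_prog (gs @ [g]) = max (max_prog gs) (prog g)"
proof -
  have "insert 0 (prog ` set (gs @ [g])) = insert (prog g) (insert 0 (prog ` set gs))" by auto
  then show ?thesis unfolding max_prog_def by (simp add: max.commute)
qed

lemma prog_le_max_prog: "g \<in> set gs \<Longrightarrow> prog g \<le> max_prog gs"
  unfolding max_prog_def by simp

lemma prog_le_max_prog_if_supp_subset:
  assumes "supp x \<subseteq> \<Union> (supp ` set gs)"
  shows "prog x \<le> max_prog gs"
  unfolding prog_le_iff
proof (intro allI impI)
  fix j assume "x $ j \<noteq> 0"
  with assms obtain g where g: "g \<in> set gs" "g $ j \<noteq> 0" by (auto simp: supp_def)
  have "idx j \<le> prog g" using g(2) by (rule idx_le_prog)
  also have "\<dots> \<le> max_prog gs" using g(1) by (rule prog_le_max_prog)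
  finally show "idx j \<le> max_prog gs" .
qed

section \<open>Time needed to collect gradients\<close>

definition progress_time :: "real \<Rightarrow> (nat \<Rightarrow> real) \<Rightarrow> nat \<Rightarrow> real" where
  "progress_time p \<tau> n = Min ((\<lambda>m. inverse (\<Sum>i=1..m. 1 / \<tau> i) * (1/p + real m)) ` {1..n})"

lemma progress_time_pos:
  assumes "1 \<le> n" "0 < p" and pos: "\<And>j. j \<in> {1..n} \<Longrightarrow> 0 < \<tau> j"
  shows "0 < progress_time p \<tau> n"
proof -
  have "0 < inverse (\<Sum>i=1..m. 1 / \<tau> i) * (1/p + real m)" if "m \<in> {1..n}" for m
  proof -
    have "0 < (\<Sum>i=1..m. 1 / \<tau> i)" by (rule sum_pos) (use that pos in auto)
    then show ?thesis using \<open>0 < p\<close> by (simp add: add_pos_nonneg)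
  qed
  then show ?thesis unfolding progress_time_def using \<open>1 \<le> n\<close> by (subst Min_gr_iff) auto
qed

text \<open>In a window of length \<Delta> only the workers j with \<tau> j \<le> \<Delta>, an initial segment {1..m}, can
  finish a computation, and worker j finishes at most \<Delta> / \<tau> j of them.\<close>
lemma counts_le_inverse_sum:
  fixes u :: "nat \<Rightarrow> nat"
  assumes pos: "\<And>j. j \<in> {1..n} \<Longrightarrow> 0 < \<tau> j"
    and mono: "\<And>i j. 1 \<le> i \<Longrightarrow> i \<le> j \<Longrightarrow> j \<le> n \<Longrightarrow> \<tau> i \<le> \<tau> j"
    and busy: "\<And>j. j \<in> {1..n} \<Longrightarrow> real (u j) * \<tau> j \<le> \<Delta>"
    and j0: "j0 \<in> {1..n}" "0 < u j0"
  obtains m where "m \<in> {1..n}"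
    "real (\<Sum>j\<in>{1..n}. u j) \<le> \<Delta> * (\<Sum>i=1..m. 1 / \<tau> i)"
    "real m \<le> \<Delta> * (\<Sum>i=1..m. 1 / \<tau> i)"
proof -
  have fast_if_active: "\<tau> j \<le> \<Delta>" if "j \<in> {1..n}" "0 < u j" for j
  proof -
    have "\<tau> j \<le> real (u j) * \<tau> j" using that(2) pos[OF that(1)] by (simp add: mult_le_cancel_right1)
    also have "\<dots> \<le> \<Delta>" by (rule busy[OF that(1)])
    finally show ?thesis .
  qed
  define M where "M = {j \<in> {1..n}. \<tau> j \<le> \<Delta>}"
  have "finite M" "j0 \<in> M" using j0 fast_if_active by (auto simp: M_def)
  define m where "m = Max M"
  have "m \<in> M" unfolding m_def using \<open>finite M\<close> \<open>j0 \<in> M\<close> by (intro Max_in) auto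
  then have m: "m \<in> {1..n}" "\<tau> m \<le> \<Delta>" by (auto simp: M_def)
  have inactive: "u j = 0" if "j \<in> {1..n}" "m < j" for j
  proof (rule ccontr)
    assume "u j \<noteq> 0"
    then have "j \<in> M" using that fast_if_active[of j] by (simp add: M_def)
    then have "j \<le> m" unfolding m_def using \<open>finite M\<close> by simp
    with \<open>m < j\<close> show False by simp
  qed
  have "real (\<Sum>j\<in>{1..n}. u j) = (\<Sum>j=1..m. real (u j))"
    by (subst sum.mono_neutral_right[of "{1..n}" "{1..m}"]) (use m inactive in auto)
  also have "\<dots> \<le> (\<Sum>i=1..m. \<Delta> * (1 / \<tau> i))"
    using busy pos m by (intro sum_mono) (auto simp: field_simps)
  finally have counts: "real (\<Sum>j\<in>{1..n}. u j) \<le> \<Delta> * (\<Sum>i=1..m. 1 / \<tau> i)"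
    by (simp add: sum_distrib_left)
  have "real m = (\<Sum>i=1..m. 1)" by simp
  also have "\<dots> \<le> (\<Sum>i=1..m. \<Delta> * (1 / \<tau> i))"
  proof (rule sum_mono)
    fix i assume "i \<in> {1..m}"
    then have "\<tau> i \<le> \<Delta>" "0 < \<tau> i" using mono[of i m] m pos[of i] by auto
    then show "1 \<le> \<Delta> * (1 / \<tau> i)" by (simp add: field_simps)
  qed
  finally show ?thesis using that m(1) counts by (simp add: sum_distrib_left)
qed

lemma min_one_mult_le:
  fixes p N m :: real
  assumes "0 < p" "0 \<le> N" "0 \<le> m"
  shows "min 1 (p * N) * (1/p + m) \<le> N + m"
proof (cases "p * N \<le> 1")
  case True
  then have "p * N * m \<le> m" using assms by (simp add: mult_left_le_one_le)
  moreover have "min 1 (p * N) * (1/p + m) = N + p * N * m" using True assms by (simp add: field_simps)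
  ultimately show ?thesis by simp
next
  case False
  then show ?thesis using assms by (simp add: field_simps)
qed

lemma progress_time_le:
  fixes u :: "nat \<Rightarrow> nat"
  assumes pos: "\<And>j. j \<in> {1..n} \<Longrightarrow> 0 < \<tau> j"
    and mono: "\<And>i j. 1 \<le> i \<Longrightarrow> i \<le> j \<Longrightarrow> j \<le> n \<Longrightarrow> \<tau> i \<le> \<tau> j"
    and "0 < p"
    and busy: "\<And>j. j \<in> {1..n} \<Longrightarrow> real (u j) * \<tau> j \<le> \<Delta>"
    and N: "1 \<le> (\<Sum>j\<in>{1..n}. u j)"
  shows "min 1 (p * real (\<Sum>j\<in>{1..n}. u j)) * progress_time p \<tau> n \<le> 2 * \<Delta>"
proof -
  define N where "N = real (\<Sum>j\<in>{1..n}. u j)"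
  have "0 \<le> N" unfolding N_def by (simp add: sum_nonneg)
  obtain j0 where j0: "j0 \<in> {1..n}" "0 < u j0"
    using N by (metis (no_types, lifting) gr0I sum.neutral not_one_le_zero)
  obtain m where m: "m \<in> {1..n}" "N \<le> \<Delta> * (\<Sum>i=1..m. 1 / \<tau> i)" "real m \<le> \<Delta> * (\<Sum>i=1..m. 1 / \<tau> i)"
    using counts_le_inverse_sum[where u = u, OF pos mono busy j0] unfolding N_def by blast
  define s where "s = (\<Sum>i=1..m. 1 / \<tau> i)"
  have "0 < s" unfolding s_def by (rule sum_pos) (use m pos in auto)
  have "progress_time p \<tau> n \<le> inverse s * (1/p + real m)"
    unfolding progress_time_def s_def by (rule Min_le) (use m in auto)
  then have "min 1 (p * N) * progress_time p \<tau> n \<le> min 1 (p * N) * (inverse s * (1/p + real m))"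
    using \<open>0 < p\<close> \<open>0 \<le> N\<close> by (intro mult_left_mono) auto
  also have "\<dots> = min 1 (p * N) * (1/p + real m) / s"
    by (simp add: divide_inverse)
  also have "\<dots> \<le> (N + real m) / s"
    using min_one_mult_le[OF \<open>0 < p\<close> \<open>0 \<le> N\<close>, of "real m"] \<open>0 < s\<close> by (intro divide_right_mono) auto
  also have "\<dots> \<le> 2 * \<Delta>"
  proof -
    have "N + real m \<le> 2 * \<Delta> * s" using m(2,3) unfolding s_def by linarith
    then show ?thesis by (simp only: pos_divide_le_eq[OF \<open>0 < s\<close>])
  qed
  finally show ?thesis by (simp only: N_def)
qed

section \<open>Inequalities for the potential\<close>

definition \<psi> :: "real \<Rightarrow> real \<Rightarrow> real" where
  "\<psi> p c = (if p * c < 1 then exp (-12 * (p * c)) / 13 + exp (-12) else exp (-12))"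

lemma psi_nonneg: "0 \<le> \<psi> p c"
  unfolding \<psi>_def by simp

lemma one_plus_mult_exp_le: "(1 + a) * exp (- a) \<le> (1::real)"
proof -
  have "(1 + a) * exp (- a) \<le> exp a * exp (- a)"
    using exp_ge_add_one_self[of a] by (intro mult_right_mono) auto
  then show ?thesis by (simp add: exp_minus_inverse)
qed

lemma psi_step:
  fixes p c :: real
  assumes p: "0 < p" "p \<le> 1" and c: "0 \<le> c"
  shows "p * max (exp (-12 * min 1 (p * (c + 1)))) (\<psi> p (c + 1)) + (1 - p) * \<psi> p (c + 1) \<le> \<psi> p c"
proof -
  consider "1 \<le> p * c" | "p * c < 1" "1 \<le> p * (c + 1)" | "p * (c + 1) < 1" by linarith
  then show ?thesis
  proof cases
    case 1
    then have "1 \<le> p * (c + 1)" using p by (simp add: algebra_simps)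
    then show ?thesis using 1 by (simp add: \<psi>_def algebra_simps)
  next
    case 2
    then show ?thesis by (simp add: \<psi>_def algebra_simps)
  next
    case 3
    define E where "E = exp (-12 * (p * (c + 1)))"
    have "0 < E" by (simp add: E_def)
    have psi1: "\<psi> p (c + 1) = E / 13 + exp (-12)" using 3 by (simp add: \<psi>_def E_def)
    have "p * max (exp (-12 * min 1 (p * (c + 1)))) (\<psi> p (c + 1)) + (1 - p) * \<psi> p (c + 1)
        \<le> p * (E + exp (-12)) + (1 - p) * (E / 13 + exp (-12))"
      using 3 p \<open>0 < E\<close> by (intro add_mono mult_left_mono) (auto simp: psi1 E_def)
    also have "\<dots> = exp (-12 * (p * c)) * ((1 + 12 * p) * exp (- (12 * p))) / 13 + exp (-12)"
      by (simp add: E_def field_simps flip: exp_add)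
    also have "\<dots> \<le> exp (-12 * (p * c)) / 13 + exp (-12)"
      using one_plus_mult_exp_le[of "12 * p"] by (simp add: mult_left_le)
    also have "\<dots> = \<psi> p c" using 3 p by (simp add: \<psi>_def algebra_simps)
    finally show ?thesis .
  qed
qed

definition \<rho> :: real where "\<rho> = 1/13 + exp (-12)"

lemma psi_zero [simp]: "\<psi> p 0 = \<rho>"
  by (simp add: \<psi>_def \<rho>_def)

lemma rho_pos: "0 < \<rho>"
  unfolding \<rho>_def by (intro add_pos_pos) simp_all

text \<open>The constants are chosen so that \<rho> \<le> exp (- 1/2).\<close>
lemma rho_pow_le:
  assumes "0 < \<delta>" "0 < F" "t \<le> 1/24 * F * (real T / 2 + ln \<delta>)"
  shows "\<rho> ^ T \<le> \<delta> * exp (- 24 * t / F)"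
proof -
  have "exp (12::real) \<ge> 13" using exp_ge_add_one_self[of 12] by simp
  then have "\<rho> \<le> 2/13" by (simp add: \<rho>_def exp_minus field_simps)
  moreover have "exp (1/2::real) \<le> 3" using exp_le exp_le_cancel_iff[of "1/2" 1] by linarith
  ultimately have "\<rho> * exp (1/2) \<le> 2/13 * 3" using rho_pos by (intro mult_mono) auto
  then have "\<rho> * exp (1/2) \<le> 1" by simp
  then have "\<rho> \<le> exp (- 1/2)" by (simp add: exp_minus field_simps)
  then have "\<rho> ^ T \<le> exp (- 1/2) ^ T" using rho_pos by (intro power_mono) auto
  also have "\<dots> = exp (- real T / 2)" by (simp flip: exp_of_nat_mult)
  also have "\<dots> \<le> exp (ln \<delta> - 24 * t / F)"
    using assms(2,3) by (simp add: field_simps)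
  also have "\<dots> = \<delta> * exp (- 24 * t / F)"
    using assms(1) by (simp add: exp_diff exp_minus field_simps)
  finally show ?thesis .
qed

lemma power_diff_Suc_Suc:
  fixes x :: "'a::monoid_mult"
  assumes "Suc J < T"
  shows "x ^ (T - Suc (Suc J)) * x = x ^ (T - Suc J)"
proof -
  have "T - Suc J = Suc (T - Suc (Suc J))" using assms by simp
  then show ?thesis by (simp add: power_commutes)
qed

lemma sum_fun_upd_Suc:
  assumes "finite I" "i \<in> I"
  shows "(\<Sum>j\<in>I. (u(i := Suc (u i))) j) = (\<Sum>j\<in>I. u j) + 1"
  using assms by (simp add: sum.remove)

section \<open>Coin sequences and supermartingales\<close>

abbreviation coins :: "real \<Rightarrow> (nat \<Rightarrow> bool) measure" where
  "coins p \<equiv> PiM UNIV (\<lambda>_::nat. measure_pmf (bernoulli_pmf p))"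

lemma space_coins [simp]: "space (coins p) = UNIV"
  by (auto simp: space_PiM PiE_def extensional_def)

lemma prob_space_coins: "prob_space (coins p)"
  by (intro prob_space_PiM) (simp add: prob_space_measure_pmf)

definition extend_word :: "bool list \<Rightarrow> nat \<Rightarrow> bool" where
  "extend_word w i \<longleftrightarrow> i < length w \<and> w ! i"

definition word_prob :: "real \<Rightarrow> bool list \<Rightarrow> real" where
  "word_prob p w = (\<Prod>i<length w. if w ! i then p else 1 - p)"

definition cylinder :: "bool list \<Rightarrow> (nat \<Rightarrow> bool) set" where
  "cylinder w = {\<omega>. \<forall>i<length w. \<omega> i = w ! i}"

lemma extend_word_snoc: "extend_word (w @ [b]) = (extend_word w)(length w := b)"
  by (auto simp: extend_word_def nth_append fun_eq_iff)

lemma word_prob_snoc: "word_prob p (w @ [b]) = word_prob p w * (if b then p else 1 - p)"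
  unfolding word_prob_def by (simp add: nth_append)

lemma word_prob_nonneg: "0 \<le> p \<Longrightarrow> p \<le> 1 \<Longrightarrow> 0 \<le> word_prob p w"
  unfolding word_prob_def by (intro prod_nonneg) auto

lemma finite_words: "finite {w :: bool list. length w = K}"
  using finite_lists_length_eq[of "UNIV :: bool set" K] by simp

lemma sum_words_Suc:
  "(\<Sum>w | length w = Suc K. f w) = (\<Sum>w | length w = K. f (w @ [True]) + f (w @ [False]))"
proof -
  have words: "{w :: bool list. length w = Suc K} = (\<lambda>(w, b). w @ [b]) ` ({w. length w = K} \<times> UNIV)"
  proof (intro set_eqI iffI)
    fix w :: "bool list" assume "w \<in> {w. length w = Suc K}"
    then show "w \<in> (\<lambda>(w, b). w @ [b]) ` ({w. length w = K} \<times> UNIV)"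
      by (cases w rule: rev_cases) (auto simp: image_iff)
  qed auto
  have "inj_on (\<lambda>(w, b). w @ [b]) ({w :: bool list. length w = K} \<times> UNIV)"
    by (auto simp: inj_on_def)
  then have "(\<Sum>w | length w = Suc K. f w) = (\<Sum>(w, b) \<in> {w. length w = K} \<times> UNIV. f (w @ [b]))"
    unfolding words by (subst sum.reindex) (simp_all add: case_prod_unfold)
  also have "\<dots> = (\<Sum>w | length w = K. \<Sum>b\<in>UNIV. f (w @ [b]))"
    by (rule sum.cartesian_product[symmetric])
  finally show ?thesis by (simp add: UNIV_bool add.commute)
qed

lemma cylinder_eq_prod_emb:
  "cylinder w = prod_emb UNIV (\<lambda>_. measure_pmf (bernoulli_pmf p)) {..<length w} (\<Pi>\<^sub>E i\<in>{..<length w}. {w ! i})"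
  by (auto simp: cylinder_def prod_emb_iff PiE_iff extensional_def)

lemma sets_cylinder: "cylinder w \<in> sets (coins p)"
  unfolding cylinder_eq_prod_emb[where p = p] by (rule sets_PiM_I) auto

lemma measure_cylinder:
  assumes "0 \<le> p" "p \<le> 1"
  shows "measure (coins p) (cylinder w) = word_prob p w"
proof -
  have "emeasure (coins p) (cylinder w) = (\<Prod>i<length w. emeasure (measure_pmf (bernoulli_pmf p)) {w ! i})"
    unfolding cylinder_eq_prod_emb[where p = p]
    by (rule emeasure_PiM_emb) (auto simp: prob_space_measure_pmf)
  also have "\<dots> = (\<Prod>i<length w. ennreal (if w ! i then p else 1 - p))"
    using assms by (intro prod.cong refl) (simp add: emeasure_pmf_single)
  also have "\<dots> = ennreal (word_prob p w)"
    unfolding word_prob_def using assms by (intro prod_ennreal) auto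
  finally show ?thesis
    unfolding measure_def using word_prob_nonneg[OF assms] by simp
qed

lemma prefix_event_eq_UN_cylinder:
  assumes "\<And>\<omega> \<omega>'. (\<And>i. i < K \<Longrightarrow> \<omega> i = \<omega>' i) \<Longrightarrow> Q \<omega> = Q \<omega>'"
  shows "{\<omega>. Q \<omega>} = (\<Union>w \<in> {w. length w = K \<and> Q (extend_word w)}. cylinder w)"
proof (intro set_eqI iffI)
  fix \<omega> assume "\<omega> \<in> {\<omega>. Q \<omega>}"
  moreover have "\<omega> \<in> cylinder (map \<omega> [0..<K])" by (simp add: cylinder_def)
  moreover have "Q (extend_word (map \<omega> [0..<K])) = Q \<omega>"
    by (rule assms) (simp add: extend_word_def)
  moreover have "length (map \<omega> [0..<K]) = K" by simp
  ultimately show "\<omega> \<in> (\<Union>w \<in> {w. length w = K \<and> Q (extend_word w)}. cylinder w)" by blast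
next
  fix \<omega> assume "\<omega> \<in> (\<Union>w \<in> {w. length w = K \<and> Q (extend_word w)}. cylinder w)"
  then obtain w where "length w = K" "Q (extend_word w)" "\<omega> \<in> cylinder w" by blast
  moreover have "Q (extend_word w) = Q \<omega>"
    by (rule assms) (use calculation in \<open>simp add: extend_word_def cylinder_def\<close>)
  ultimately show "\<omega> \<in> {\<omega>. Q \<omega>}" by simp
qed

lemma disjoint_family_on_cylinder: "disjoint_family_on cylinder {w. length w = K}"
  unfolding disjoint_family_on_def
proof (intro ballI impI)
  fix v w :: "bool list" assume "v \<in> {w. length w = K}" "w \<in> {w. length w = K}" "v \<noteq> w"
  then have "length v = K" "length w = K" by auto
  then obtain i where "i < K" "v ! i \<noteq> w ! i" using \<open>v \<noteq> w\<close> nth_equalityI[of v w] by auto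
  then show "cylinder v \<inter> cylinder w = {}" using \<open>length v = K\<close> \<open>length w = K\<close> by (auto simp: cylinder_def)
qed

lemma
  assumes p: "0 \<le> p" "p \<le> 1"
    and Q: "\<And>\<omega> \<omega>'. (\<And>i. i < K \<Longrightarrow> \<omega> i = \<omega>' i) \<Longrightarrow> Q \<omega> = Q \<omega>'"
  shows sets_prefix_event: "{\<omega>. Q \<omega>} \<in> sets (coins p)"
    and measure_prefix_event: "measure (coins p) {\<omega>. Q \<omega>} = (\<Sum>w | length w = K \<and> Q (extend_word w). word_prob p w)"
proof -
  let ?W = "{w. length w = K \<and> Q (extend_word w)}"
  have "finite ?W" by (rule finite_subset[OF _ finite_words[of K]]) auto
  have Q_eq: "{\<omega>. Q \<omega>} = (\<Union>w\<in>?W. cylinder w)" by (rule prefix_event_eq_UN_cylinder[OF Q])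
  show "{\<omega>. Q \<omega>} \<in> sets (coins p)"
    unfolding Q_eq using \<open>finite ?W\<close> sets_cylinder by (intro sets.finite_UN)
  interpret prob_space "coins p" by (rule prob_space_coins)
  have "disjoint_family_on cylinder ?W"
    by (rule disjoint_family_on_mono[OF _ disjoint_family_on_cylinder[of K]]) auto
  then have "measure (coins p) {\<omega>. Q \<omega>} = (\<Sum>w\<in>?W. measure (coins p) (cylinder w))"
    unfolding Q_eq using \<open>finite ?W\<close> sets_cylinder by (intro finite_measure_finite_Union) auto
  then show "measure (coins p) {\<omega>. Q \<omega>} = (\<Sum>w\<in>?W. word_prob p w)"
    by (simp add: measure_cylinder[OF p])
qed

text \<open>Hypothesis step says that V is a supermartingale with respect to the coin flips; the left-hand
  side is the expectation of V K.\<close>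
lemma sum_words_supermartingale:
  fixes V :: "nat \<Rightarrow> (nat \<Rightarrow> bool) \<Rightarrow> real"
  assumes p: "0 \<le> p" "p \<le> 1"
    and step: "\<And>\<omega> k. p * V (Suc k) (fun_upd \<omega> k True) + (1 - p) * V (Suc k) (fun_upd \<omega> k False) \<le> V k \<omega>"
  shows "(\<Sum>w | length w = K. V K (extend_word w) * word_prob p w) \<le> V 0 (extend_word [])"
proof (induction K)
  case 0
  have "{w :: bool list. length w = 0} = {[]}" by auto
  then show ?case by (simp add: word_prob_def)
next
  case (Suc K)
  have "(\<Sum>w | length w = Suc K. V (Suc K) (extend_word w) * word_prob p w)
      = (\<Sum>w | length w = K. word_prob p w * (p * V (Suc K) ((extend_word w)(length w := True))
            + (1 - p) * V (Suc K) ((extend_word w)(length w := False))))"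
    unfolding sum_words_Suc by (intro sum.cong refl) (simp add: extend_word_snoc word_prob_snoc algebra_simps)
  also have "\<dots> \<le> (\<Sum>w | length w = K. word_prob p w * V K (extend_word w))"
    using step word_prob_nonneg[OF p] by (intro sum_mono mult_left_mono) auto
  also have "\<dots> \<le> V 0 (extend_word [])" using Suc by (simp add: mult.commute)
  finally show ?case .
qed

lemma measure_prefix_event_le_potential:
  fixes V :: "nat \<Rightarrow> (nat \<Rightarrow> bool) \<Rightarrow> real"
  assumes p: "0 \<le> p" "p \<le> 1"
    and step: "\<And>\<omega> k. p * V (Suc k) (fun_upd \<omega> k True) + (1 - p) * V (Suc k) (fun_upd \<omega> k False) \<le> V k \<omega>"
    and nonneg: "\<And>k \<omega>. 0 \<le> V k \<omega>"
    and Q: "\<And>\<omega> \<omega>'. (\<And>i. i < K \<Longrightarrow> \<omega> i = \<omega>' i) \<Longrightarrow> Q \<omega> = Q \<omega>'"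
    and large: "\<And>\<omega>. Q \<omega> \<Longrightarrow> c \<le> V K \<omega>"
  shows "c * measure (coins p) {\<omega>. Q \<omega>} \<le> V 0 (extend_word [])"
proof -
  have "c * measure (coins p) {\<omega>. Q \<omega>} = (\<Sum>w | length w = K \<and> Q (extend_word w). c * word_prob p w)"
    by (subst measure_prefix_event[where K = K, OF p Q]) (simp_all add: sum_distrib_left)
  also have "\<dots> \<le> (\<Sum>w | length w = K \<and> Q (extend_word w). V K (extend_word w) * word_prob p w)"
    using large word_prob_nonneg[OF p] by (intro sum_mono mult_right_mono) auto
  also have "\<dots> \<le> (\<Sum>w | length w = K. V K (extend_word w) * word_prob p w)"
    using nonneg word_prob_nonneg[OF p]
    by (intro sum_mono2[OF finite_words]) auto
  also have "\<dots> \<le> V 0 (extend_word [])"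
    by (rule sum_words_supermartingale[OF p step])
  finally show ?thesis .
qed

lemma (in prob_space) prob_compl_UN_incseq_ge:
  assumes "range C \<subseteq> events" "incseq C" "\<And>K. prob (C K) \<le> \<delta>"
  shows "1 - \<delta> \<le> prob (space M - (\<Union>K. C K))"
proof -
  have "(\<lambda>K. prob (C K)) \<longlonglongrightarrow> prob (\<Union>K. C K)"
    using assms(1,2) by (rule finite_Lim_measure_incseq)
  then have "prob (\<Union>K. C K) \<le> \<delta>"
    using assms(3) by (intro LIMSEQ_le_const2) auto
  moreover have "prob (space M - (\<Union>K. C K)) = 1 - prob (\<Union>K. C K)"
    using assms(1) by (intro prob_compl) auto
  ultimately show ?thesis by simp
qed

section \<open>Runs of the protocol with delayed oracles\<close>

lemma run_cong_prefix: "(\<And>i. i < k \<Longrightarrow> \<omega> i = \<omega>' i) \<Longrightarrow> run A Or s0 \<omega> k = run A Or s0 \<omega>' k"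
  by (induction k) (auto split: prod.splits)

lemma length_grads: "length (grads A Or s0 \<omega> k) = k"
  by (induction k) (auto simp: grads_def split: prod.splits)

locale delayed_oracle_run =
  fixes n T :: nat and p :: real and \<tau> :: "nat \<Rightarrow> real"
    and grad :: "real ^ 'n::{finite,linorder} \<Rightarrow> real ^ 'n::{finite,linorder}"
    and A :: "nat \<Rightarrow> (real ^ 'n::{finite,linorder}) list \<Rightarrow> real \<times> nat \<times> (real ^ 'n::{finite,linorder})"
  assumes T_pos: "1 \<le> T"
    and prog_grad: "\<And>x. prog (grad x) \<le> prog x + 1"
    and n_pos: "1 \<le> n"
    and tau_pos: "0 < \<tau> 1"
    and tau_mono: "\<And>i j. 1 \<le> i \<Longrightarrow> i \<le> j \<Longrightarrow> j \<le> n \<Longrightarrow> \<tau> i \<le> \<tau> j"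
    and p: "0 < p" "p \<le> 1"
    and alg: "is_algorithm n A"
    and zero_resp: "\<And>\<omega> k. supp (proto_point A (\<lambda>i. delayed_oracle (\<tau> i) (Gmap grad p)) (0, 0, False) \<omega> k)
        \<subseteq> \<Union> (supp ` set (grads A (\<lambda>i. delayed_oracle (\<tau> i) (Gmap grad p)) (0, 0, False) \<omega> k))"
begin

abbreviation "oracles \<equiv> \<lambda>i. delayed_oracle (\<tau> i) (Gmap grad p)"
abbreviation "gradients \<omega> k \<equiv> grads A oracles (0, 0, False) \<omega> k"
abbreviation "time \<omega> k \<equiv> proto_time A oracles (0, 0, False) \<omega> k"
abbreviation "point \<omega> k \<equiv> proto_point A oracles (0, 0, False) \<omega> k"

definition states :: "(nat \<Rightarrow> bool) \<Rightarrow> nat \<Rightarrow> nat \<Rightarrow> real \<times> (real ^ 'n::{finite,linorder}) \<times> bool" where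
  "states \<omega> k = snd (run A oracles (0, 0, False) \<omega> k)"

definition query_time :: "(nat \<Rightarrow> bool) \<Rightarrow> nat \<Rightarrow> real" where
  "query_time \<omega> k = fst (A k (gradients \<omega> k))"

definition query_oracle :: "(nat \<Rightarrow> bool) \<Rightarrow> nat \<Rightarrow> nat" where
  "query_oracle \<omega> k = fst (snd (A k (gradients \<omega> k)))"

definition progress :: "(nat \<Rightarrow> bool) \<Rightarrow> nat \<Rightarrow> nat" where
  "progress \<omega> k = max_prog (gradients \<omega> k)"

lemma tau_pos': "i \<in> {1..n} \<Longrightarrow> 0 < \<tau> i"
  using tau_pos tau_mono[of 1 i] by force

lemma time_0 [simp]: "time \<omega> 0 = 0"
  by (simp add: proto_time_def)

lemma time_Suc: "time \<omega> (Suc k) = query_time \<omega> k"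
  by (simp add: proto_time_def query_time_def)

lemma query_time_nonneg: "0 \<le> query_time \<omega> k"
  and query_oracle_range: "query_oracle \<omega> k \<in> {1..n}"
  using alg length_grads[of A oracles "(0, 0, False)" \<omega> k]
  unfolding is_algorithm_def query_time_def query_oracle_def by blast+

lemma time_le_query_time: "time \<omega> k \<le> query_time \<omega> k"
proof (cases k)
  case (Suc k')
  have "length (gradients \<omega> k) = Suc k'" using Suc by (simp add: length_grads)
  moreover have "take k' (gradients \<omega> k) = gradients \<omega> k'"
    using Suc length_grads[of A oracles "(0, 0, False)" \<omega> k']
    by (auto simp: grads_def split: prod.splits)
  ultimately have "fst (A k' (gradients \<omega> k')) \<le> fst (A k (gradients \<omega> k))"
    using alg Suc unfolding is_algorithm_def by metis
  then show ?thesis using Suc by (simp add: time_Suc query_time_def)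
qed (simp add: query_time_nonneg)

lemma
  fixes \<omega> k
  defines "i \<equiv> query_oracle \<omega> k"
  shows gradients_Suc: "gradients \<omega> (Suc k) = gradients \<omega> k @
      [snd (oracles i (query_time \<omega> k) (point \<omega> k) (states \<omega> k i) (\<omega> k))]"
    and states_Suc: "states \<omega> (Suc k) = (states \<omega> k)
      (i := fst (oracles i (query_time \<omega> k) (point \<omega> k) (states \<omega> k i) (\<omega> k)))"
  unfolding i_def grads_def states_def query_time_def query_oracle_def proto_point_def
  by (auto split: prod.splits)

lemma states_0 [simp]: "states \<omega> 0 = (\<lambda>_. (0, 0, False))"
  by (simp add: states_def)

lemma query_cases:
  fixes \<omega> k
  defines "i \<equiv> query_oracle \<omega> k"
  obtains (start) st sx where "states \<omega> k i = (st, sx, False)"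
      "states \<omega> (Suc k) = (states \<omega> k)(i := (query_time \<omega> k, point \<omega> k, True))"
      "gradients \<omega> (Suc k) = gradients \<omega> k @ [0]"
  | (wait) st sx where "states \<omega> k i = (st, sx, True)" "query_time \<omega> k < st + \<tau> i"
      "states \<omega> (Suc k) = states \<omega> k" "gradients \<omega> (Suc k) = gradients \<omega> k @ [0]"
  | (return) st sx where "states \<omega> k i = (st, sx, True)" "st + \<tau> i \<le> query_time \<omega> k"
      "states \<omega> (Suc k) = (states \<omega> k)(i := (0, 0, False))"
      "gradients \<omega> (Suc k) = gradients \<omega> k @ [Gmap grad p sx (\<omega> k)]"
proof -
  obtain st sx b where s: "states \<omega> k i = (st, sx, b)" by (cases "states \<omega> k i") auto
  show thesis
  proof (cases b)
    case False
    then show thesis using s gradients_Suc[of \<omega> k] states_Suc[of \<omega> k]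
      by (intro start[of st sx]) (auto simp: i_def delayed_oracle_def)
  next
    case True
    then show thesis using s gradients_Suc[of \<omega> k] states_Suc[of \<omega> k]
      by (cases "query_time \<omega> k < st + \<tau> i")
        (auto simp: i_def delayed_oracle_def fun_upd_idem intro: wait[of st sx] return[of st sx])
  qed
qed

lemma progress_0 [simp]: "progress \<omega> 0 = 0"
  by (simp add: progress_def grads_def)

lemma progress_Suc_eq_if_zero:
  "gradients \<omega> (Suc k) = gradients \<omega> k @ [0] \<Longrightarrow> progress \<omega> (Suc k) = progress \<omega> k"
  by (simp add: progress_def max_prog_snoc)

lemma progress_le_Suc: "progress \<omega> k \<le> progress \<omega> (Suc k)"
  by (cases \<omega> k rule: query_cases) (simp_all add: progress_def max_prog_snoc)

lemma progress_mono: "k \<le> K \<Longrightarrow> progress \<omega> k \<le> progress \<omega> K"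
  by (induction K rule: dec_induct) (auto intro: order_trans progress_le_Suc)

lemma prog_point_le_progress: "prog (point \<omega> k) \<le> progress \<omega> k"
  unfolding progress_def by (rule prog_le_max_prog_if_supp_subset[OF zero_resp])

lemma prog_busy_le_progress: "states \<omega> k i = (st, sx, True) \<Longrightarrow> prog sx \<le> progress \<omega> k"
proof (induction k arbitrary: i st sx)
  case 0
  then show ?case by simp
next
  case (Suc k)
  have IH: "prog sx \<le> progress \<omega> (Suc k)" if "states \<omega> k i = (st, sx, True)"
    using Suc.IH[OF that] progress_le_Suc[of \<omega> k] by simp
  show ?case
  proof (cases \<omega> k rule: query_cases)
    case (start st' sx')
    then show ?thesis using Suc.prems IH prog_point_le_progress[of \<omega> k] progress_Suc_eq_if_zero
      by (auto split: if_splits)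
  next
    case (wait st' sx')
    then show ?thesis using Suc.prems IH by simp
  next
    case (return st' sx')
    then show ?thesis using Suc.prems IH by (auto split: if_splits)
  qed
qed

lemma progress_increase:
  assumes "progress \<omega> k < progress \<omega> (Suc k)"
  obtains st sx where "states \<omega> k (query_oracle \<omega> k) = (st, sx, True)"
    "st + \<tau> (query_oracle \<omega> k) \<le> query_time \<omega> k" "prog sx = progress \<omega> k"
    "\<omega> k" "progress \<omega> (Suc k) = Suc (progress \<omega> k)"
proof (cases \<omega> k rule: query_cases)
  case (return st sx)
  define g where "g = Gmap grad p sx (\<omega> k)"
  have Suc_k: "progress \<omega> (Suc k) = max (progress \<omega> k) (prog g)"
    using return(4) by (simp add: progress_def max_prog_snoc g_def)
  have "prog sx \<le> progress \<omega> k" using return(1) by (rule prog_busy_le_progress)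
  moreover have "prog g \<le> Suc (prog sx)" unfolding g_def using prog_grad by (rule prog_Gmap_le_Suc)
  moreover have "\<omega> k"
    using prog_Gmap_False_le[of grad p sx] assms Suc_k \<open>prog sx \<le> progress \<omega> k\<close>
    by (cases "\<omega> k") (auto simp: g_def)
  ultimately show thesis using that return assms Suc_k by simp
qed (use assms progress_Suc_eq_if_zero in auto)

definition collects_since :: "(nat \<Rightarrow> bool) \<Rightarrow> nat \<Rightarrow> real \<Rightarrow> bool" where
  "collects_since \<omega> k S \<longleftrightarrow> (case states \<omega> k (query_oracle \<omega> k) of (st, sx, busy) \<Rightarrow>
     busy \<and> st + \<tau> (query_oracle \<omega> k) \<le> query_time \<omega> k \<and> S \<le> st)"

definition count_update :: "(nat \<Rightarrow> bool) \<Rightarrow> nat \<Rightarrow> real \<Rightarrow> (nat \<Rightarrow> nat) \<Rightarrow> nat \<Rightarrow> nat" where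
  "count_update \<omega> k S u =
     (if collects_since \<omega> k S then u(query_oracle \<omega> k := Suc (u (query_oracle \<omega> k))) else u)"

text \<open>A phase lasts from one increase of the progress to the next. The phase keeps its start time,
  for every oracle the number of gradients collected in the phase whose computation also started in
  it, and a credit summing min 1 (p N) over the finished phases below progress T, where N is the
  total count at the end of the phase.\<close>
primrec phase :: "(nat \<Rightarrow> bool) \<Rightarrow> nat \<Rightarrow> real \<times> (nat \<Rightarrow> nat) \<times> real" where
  "phase \<omega> 0 = (0, \<lambda>_. 0, 0)"
| "phase \<omega> (Suc k) = (case phase \<omega> k of (S, u, Y) \<Rightarrow>
     if progress \<omega> k < progress \<omega> (Suc k)
     then (query_time \<omega> k, \<lambda>_. 0,
           Y + (if progress \<omega> k < T then min 1 (p * real (\<Sum>j\<in>{1..n}. count_update \<omega> k S u j)) else 0))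
     else (S, count_update \<omega> k S u, Y))"

definition phase_start :: "(nat \<Rightarrow> bool) \<Rightarrow> nat \<Rightarrow> real" where
  "phase_start \<omega> k = fst (phase \<omega> k)"

definition phase_counts :: "(nat \<Rightarrow> bool) \<Rightarrow> nat \<Rightarrow> nat \<Rightarrow> nat" where
  "phase_counts \<omega> k = fst (snd (phase \<omega> k))"

definition credit :: "(nat \<Rightarrow> bool) \<Rightarrow> nat \<Rightarrow> real" where
  "credit \<omega> k = snd (snd (phase \<omega> k))"

abbreviation new_counts :: "(nat \<Rightarrow> bool) \<Rightarrow> nat \<Rightarrow> nat \<Rightarrow> nat" where
  "new_counts \<omega> k \<equiv> count_update \<omega> k (phase_start \<omega> k) (phase_counts \<omega> k)"

lemma phase_0 [simp]: "phase_start \<omega> 0 = 0" "phase_counts \<omega> 0 = (\<lambda>_. 0)" "credit \<omega> 0 = 0"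
  by (simp_all add: phase_start_def phase_counts_def credit_def)

lemma phase_Suc:
  "phase_start \<omega> (Suc k) =
     (if progress \<omega> k < progress \<omega> (Suc k) then query_time \<omega> k else phase_start \<omega> k)"
  "phase_counts \<omega> (Suc k) =
     (if progress \<omega> k < progress \<omega> (Suc k) then (\<lambda>_. 0) else new_counts \<omega> k)"
  "credit \<omega> (Suc k) = credit \<omega> k +
     (if progress \<omega> k < progress \<omega> (Suc k) \<and> progress \<omega> k < T
      then min 1 (p * real (\<Sum>j\<in>{1..n}. new_counts \<omega> k j)) else 0)"
  by (simp_all add: phase_start_def phase_counts_def credit_def split: prod.splits)

text \<open>The counted computations of each oracle run one after another inside the current phase, and
  every finished phase has lasted long enough to pay for its credit (lemma progress_time_le).\<close>
definition phase_inv :: "(nat \<Rightarrow> bool) \<Rightarrow> nat \<Rightarrow> bool" where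
  "phase_inv \<omega> k \<longleftrightarrow>
     (\<forall>i\<in>{1..n}. phase_start \<omega> k + real (phase_counts \<omega> k i) * \<tau> i \<le> time \<omega> k) \<and>
     (\<forall>i\<in>{1..n}. \<forall>st sx. states \<omega> k i = (st, sx, True) \<longrightarrow>
        (prog sx = progress \<omega> k \<longrightarrow> phase_start \<omega> k \<le> st) \<and>
        (phase_start \<omega> k \<le> st \<longrightarrow> phase_start \<omega> k + real (phase_counts \<omega> k i) * \<tau> i \<le> st)) \<and>
     credit \<omega> k * progress_time p \<tau> n \<le> 2 * phase_start \<omega> k"

lemma phase_inv_0: "phase_inv \<omega> 0"
  by (simp add: phase_inv_def)

lemma phase_start_le_time:
  assumes "phase_inv \<omega> k"
  shows "phase_start \<omega> k \<le> time \<omega> k"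
proof -
  have "phase_start \<omega> k + real (phase_counts \<omega> k 1) * \<tau> 1 \<le> time \<omega> k"
    using assms n_pos by (simp add: phase_inv_def)
  moreover have "0 \<le> real (phase_counts \<omega> k 1) * \<tau> 1" using tau_pos by simp
  ultimately show ?thesis by linarith
qed

lemma new_counts_fit:
  assumes inv: "phase_inv \<omega> k" and i: "i \<in> {1..n}"
  shows "phase_start \<omega> k + real (new_counts \<omega> k i) * \<tau> i \<le> query_time \<omega> k"
proof (cases "collects_since \<omega> k (phase_start \<omega> k) \<and> i = query_oracle \<omega> k")
  case True
  then obtain st sx where s: "states \<omega> k i = (st, sx, True)" "st + \<tau> i \<le> query_time \<omega> k"
      "phase_start \<omega> k \<le> st"
    by (auto simp: collects_since_def split: prod.splits)
  then have "phase_start \<omega> k + real (phase_counts \<omega> k i) * \<tau> i \<le> st"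
    using inv i by (auto simp: phase_inv_def)
  then show ?thesis using True s(2) by (simp add: count_update_def algebra_simps)
next
  case False
  then have "new_counts \<omega> k i = phase_counts \<omega> k i" by (auto simp: count_update_def)
  moreover have "phase_start \<omega> k + real (phase_counts \<omega> k i) * \<tau> i \<le> time \<omega> k"
    using inv i unfolding phase_inv_def by blast
  ultimately show ?thesis using time_le_query_time[of \<omega> k] by simp
qed

lemma busy_Suc_cases:
  assumes "states \<omega> (Suc k) j = (st, sx, True)"
  shows "st = query_time \<omega> k \<or> (states \<omega> k j = (st, sx, True) \<and> count_update \<omega> k S u j = u j)"
proof (cases \<omega> k rule: query_cases)
  case (wait st' sx')
  then have "\<not> collects_since \<omega> k S" by (simp add: collects_since_def)
  then show ?thesis using wait assms by (simp add: count_update_def)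
qed (use assms in \<open>auto simp: count_update_def split: if_splits\<close>)

lemma phase_inv_Suc_stay:
  assumes inv: "phase_inv \<omega> k" and stay: "progress \<omega> (Suc k) = progress \<omega> k"
  shows "phase_inv \<omega> (Suc k)"
proof -
  have phase: "phase_start \<omega> (Suc k) = phase_start \<omega> k" "phase_counts \<omega> (Suc k) = new_counts \<omega> k"
    "credit \<omega> (Suc k) = credit \<omega> k"
    using stay by (simp_all add: phase_Suc)
  have start_le: "phase_start \<omega> k \<le> query_time \<omega> k"
    using phase_start_le_time[OF inv] time_le_query_time[of \<omega> k] by linarith
  have busy: "(prog sx = progress \<omega> k \<longrightarrow> phase_start \<omega> k \<le> st) \<and>
      (phase_start \<omega> k \<le> st \<longrightarrow> phase_start \<omega> k + real (new_counts \<omega> k i) * \<tau> i \<le> st)"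
    if "i \<in> {1..n}" "states \<omega> (Suc k) i = (st, sx, True)" for i st sx
    using busy_Suc_cases[OF that(2), of "phase_start \<omega> k" "phase_counts \<omega> k"]
  proof
    assume "st = query_time \<omega> k"
    then show ?thesis using start_le new_counts_fit[OF inv that(1)] by simp
  next
    assume "states \<omega> k i = (st, sx, True) \<and> new_counts \<omega> k i = phase_counts \<omega> k i"
    then show ?thesis using inv that(1) unfolding phase_inv_def by auto
  qed
  show ?thesis
    unfolding phase_inv_def phase time_Suc stay
    using new_counts_fit[OF inv] busy inv[unfolded phase_inv_def] by blast
qed

lemma collects_since_if_progress:
  assumes inv: "phase_inv \<omega> k" and inc: "progress \<omega> k < progress \<omega> (Suc k)"
  shows "collects_since \<omega> k (phase_start \<omega> k)"
proof -
  obtain st sx where ret: "states \<omega> k (query_oracle \<omega> k) = (st, sx, True)"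
    "st + \<tau> (query_oracle \<omega> k) \<le> query_time \<omega> k" "prog sx = progress \<omega> k"
    using progress_increase[OF inc] by metis
  then have "phase_start \<omega> k \<le> st"
    using inv query_oracle_range[of \<omega> k] unfolding phase_inv_def by blast
  then show ?thesis using ret by (simp add: collects_since_def)
qed

lemma sum_new_counts:
  assumes "collects_since \<omega> k (phase_start \<omega> k)"
  shows "(\<Sum>j\<in>{1..n}. new_counts \<omega> k j) = (\<Sum>j\<in>{1..n}. phase_counts \<omega> k j) + 1"
proof -
  let ?i = "query_oracle \<omega> k"
  have "new_counts \<omega> k = (phase_counts \<omega> k)(?i := Suc (phase_counts \<omega> k ?i))"
    using assms by (simp add: count_update_def)
  then show ?thesis
    using sum_fun_upd_Suc[of "{1..n}" ?i "phase_counts \<omega> k"] query_oracle_range[of \<omega> k] by simp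
qed

lemma phase_inv_Suc_progress:
  assumes inv: "phase_inv \<omega> k" and inc: "progress \<omega> k < progress \<omega> (Suc k)"
  shows "phase_inv \<omega> (Suc k)"
proof -
  define S t' where "S = phase_start \<omega> k" and "t' = query_time \<omega> k"
  have N: "1 \<le> (\<Sum>j\<in>{1..n}. new_counts \<omega> k j)"
    using sum_new_counts[OF collects_since_if_progress[OF inv inc]] by simp
  have fit: "real (new_counts \<omega> k j) * \<tau> j \<le> t' - S" if "j \<in> {1..n}" for j
    using new_counts_fit[OF inv that] by (simp add: S_def t'_def)
  have "S \<le> t'"
    using phase_start_le_time[OF inv] time_le_query_time[of \<omega> k] by (simp add: S_def t'_def)
  then have paid: "(if progress \<omega> k < T then min 1 (p * real (\<Sum>j\<in>{1..n}. new_counts \<omega> k j)) else 0)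
      * progress_time p \<tau> n \<le> 2 * (t' - S)"
    using progress_time_le[OF tau_pos' tau_mono p(1) fit N] by auto
  have busy: "prog sx' = progress \<omega> (Suc k) \<longrightarrow> t' \<le> st'"
    if "states \<omega> (Suc k) j = (st', sx', True)" for j st' sx'
    using busy_Suc_cases[OF that] prog_busy_le_progress[of \<omega> k j st' sx'] inc
    unfolding t'_def by fastforce
  have "credit \<omega> k * progress_time p \<tau> n \<le> 2 * S"
    using inv unfolding phase_inv_def S_def by blast
  then show ?thesis
    unfolding phase_inv_def phase_Suc time_Suc using inc busy paid
    by (auto simp: t'_def S_def algebra_simps)
qed

lemma phase_inv: "phase_inv \<omega> k"
proof (induction k)
  case (Suc k)
  then show ?case
    using phase_inv_Suc_progress phase_inv_Suc_stay progress_le_Suc[of \<omega> k] by fastforce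
qed (rule phase_inv_0)

lemma
  assumes "\<And>i. i < k \<Longrightarrow> \<omega> i = \<omega>' i"
  shows gradients_cong_prefix: "gradients \<omega> k = gradients \<omega>' k"
    and states_cong_prefix: "states \<omega> k = states \<omega>' k"
  using run_cong_prefix[of k \<omega> \<omega>' A oracles "(0, 0, False)", OF assms] by (simp_all add: grads_def states_def)

lemma
  assumes "\<And>i. i < k \<Longrightarrow> \<omega> i = \<omega>' i"
  shows progress_cong_prefix: "progress \<omega> k = progress \<omega>' k"
    and query_time_cong_prefix: "query_time \<omega> k = query_time \<omega>' k"
    and query_oracle_cong_prefix: "query_oracle \<omega> k = query_oracle \<omega>' k"
    and point_cong_prefix: "point \<omega> k = point \<omega>' k"
    and collects_since_cong_prefix: "collects_since \<omega> k S = collects_since \<omega>' k S"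
    and time_cong_prefix: "time \<omega> k = time \<omega>' k"
  using gradients_cong_prefix[OF assms] states_cong_prefix[OF assms]
    gradients_cong_prefix[of "k - 1" \<omega> \<omega>'] assms
  by (simp_all add: progress_def query_time_def query_oracle_def proto_point_def
      collects_since_def proto_time_def)

lemma phase_cong_prefix: "(\<And>i. i < k \<Longrightarrow> \<omega> i = \<omega>' i) \<Longrightarrow> phase \<omega> k = phase \<omega>' k"
proof (induction k)
  case (Suc k)
  then have "phase \<omega> k = phase \<omega>' k" by simp
  with Suc.prems show ?case
    using progress_cong_prefix[of k \<omega> \<omega>'] progress_cong_prefix[of "Suc k" \<omega> \<omega>']
      query_time_cong_prefix[of k \<omega> \<omega>'] query_oracle_cong_prefix[of k \<omega> \<omega>']
      collects_since_cong_prefix[of k \<omega> \<omega>']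
    by (simp add: count_update_def split: prod.splits)
qed simp

text \<open>A supermartingale in the coin flips: each finished phase below progress T lowers it by the
  factor exp (- 12 min 1 (p N)), each level of progress still missing contributes a factor \<rho>, and
  \<psi> p c accounts for the unfinished current phase with c counted gradients.\<close>
definition potential :: "(nat \<Rightarrow> bool) \<Rightarrow> nat \<Rightarrow> real" where
  "potential \<omega> k = exp (-12 * credit \<omega> k) *
     (if progress \<omega> k < T
      then \<rho> ^ (T - 1 - progress \<omega> k) * \<psi> p (real (\<Sum>j\<in>{1..n}. phase_counts \<omega> k j)) else 1)"

lemma potential_nonneg: "0 \<le> potential \<omega> k"
  unfolding potential_def using rho_pos psi_nonneg by (simp add: zero_le_mult_iff)

lemma potential_0: "potential \<omega> 0 = \<rho> ^ T"
proof -
  obtain m where "T = Suc m" using T_pos not0_implies_Suc by fastforce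
  then have "\<rho> ^ (T - 1) * \<rho> = \<rho> ^ T" by (simp add: power_commutes)
  then show ?thesis using T_pos by (simp add: potential_def)
qed

lemma credit_le_time: "credit \<omega> k * progress_time p \<tau> n \<le> 2 * time \<omega> k"
proof -
  have "credit \<omega> k * progress_time p \<tau> n \<le> 2 * phase_start \<omega> k"
    using phase_inv[of \<omega> k] unfolding phase_inv_def by blast
  then show ?thesis using phase_start_le_time[OF phase_inv, of \<omega> k] by linarith
qed

lemma credit_frozen:
  assumes "T \<le> progress \<omega> k" "k \<le> K"
  shows "credit \<omega> K = credit \<omega> k"
  using assms(2)
proof (induction K rule: dec_induct)
  case (step K)
  then have "T \<le> progress \<omega> K" using assms(1) progress_mono[of k K \<omega>] by simp
  then show ?case using step.IH by (simp add: phase_Suc)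
qed simp

lemma potential_frozen:
  assumes "T \<le> progress \<omega> k" "k \<le> K"
  shows "potential \<omega> K = exp (-12 * credit \<omega> k)"
  using assms credit_frozen[OF assms] progress_mono[OF assms(2), of \<omega>] by (simp add: potential_def)

lemma potential_cong_prefix: "(\<And>i. i < k \<Longrightarrow> \<omega> i = \<omega>' i) \<Longrightarrow> potential \<omega> k = potential \<omega>' k"
  using phase_cong_prefix[of k \<omega> \<omega>'] progress_cong_prefix[of k \<omega> \<omega>']
  by (simp add: potential_def credit_def phase_counts_def)

lemma
  shows progress_fun_upd_self: "progress (fun_upd \<omega> k b) k = progress \<omega> k"
    and phase_fun_upd_self: "phase_start (fun_upd \<omega> k b) k = phase_start \<omega> k"
      "phase_counts (fun_upd \<omega> k b) k = phase_counts \<omega> k" "credit (fun_upd \<omega> k b) k = credit \<omega> k"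
    and collects_since_fun_upd_self: "collects_since (fun_upd \<omega> k b) k S = collects_since \<omega> k S"
    and potential_fun_upd_self: "potential (fun_upd \<omega> k b) k = potential \<omega> k"
  using progress_cong_prefix[of k "fun_upd \<omega> k b" \<omega>] phase_cong_prefix[of k "fun_upd \<omega> k b" \<omega>]
    collects_since_cong_prefix[of k "fun_upd \<omega> k b" \<omega>] potential_cong_prefix[of k "fun_upd \<omega> k b" \<omega>]
  by (simp_all add: phase_start_def phase_counts_def credit_def)

lemma potential_Suc_eq_if_idle:
  assumes "\<not> (progress \<omega> k < T \<and> collects_since \<omega> k (phase_start \<omega> k))"
  shows "potential \<omega> (Suc k) = potential \<omega> k"
proof (cases "progress \<omega> k < T")
  case True
  then have idle: "\<not> collects_since \<omega> k (phase_start \<omega> k)" using assms by simp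
  then have "\<not> progress \<omega> k < progress \<omega> (Suc k)"
    using collects_since_if_progress[OF phase_inv] by blast
  then have "progress \<omega> (Suc k) = progress \<omega> k" using progress_le_Suc[of \<omega> k] by simp
  moreover have "new_counts \<omega> k = phase_counts \<omega> k" using idle by (simp add: count_update_def)
  ultimately show ?thesis by (simp add: potential_def phase_Suc)
next
  case False
  then show ?thesis using progress_le_Suc[of \<omega> k] by (simp add: potential_def phase_Suc)
qed

lemma potential_Suc_le:
  assumes J: "progress \<omega> k < T" and collects: "collects_since \<omega> k (phase_start \<omega> k)"
  defines "c \<equiv> real (\<Sum>j\<in>{1..n}. phase_counts \<omega> k j)"
  shows "potential \<omega> (Suc k) \<le> exp (-12 * credit \<omega> k) * \<rho> ^ (T - 1 - progress \<omega> k) *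
     (if \<omega> k then max (exp (-12 * min 1 (p * (c + 1)))) (\<psi> p (c + 1)) else \<psi> p (c + 1))"
proof -
  define E where "E = exp (-12 * credit \<omega> k) * \<rho> ^ (T - 1 - progress \<omega> k)"
  have "0 \<le> E" using rho_pos by (simp add: E_def)
  have N: "real (\<Sum>j\<in>{1..n}. new_counts \<omega> k j) = c + 1"
    using sum_new_counts[OF collects] by (simp add: c_def)
  show ?thesis
  proof (cases "progress \<omega> k < progress \<omega> (Suc k)")
    case False
    then have "progress \<omega> (Suc k) = progress \<omega> k" using progress_le_Suc[of \<omega> k] by simp
    then have "potential \<omega> (Suc k) = E * \<psi> p (c + 1)"
      using False J N by (simp add: potential_def phase_Suc E_def)
    also have "\<dots> \<le> E * (if \<omega> k then max (exp (-12 * min 1 (p * (c + 1)))) (\<psi> p (c + 1)) else \<psi> p (c + 1))"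
      using \<open>0 \<le> E\<close> by (intro mult_left_mono) auto
    finally show ?thesis by (simp add: E_def)
  next
    case True
    then have "\<omega> k" "progress \<omega> (Suc k) = Suc (progress \<omega> k)"
      by (auto elim: progress_increase)
    moreover have "exp (-12 * (credit \<omega> k + m)) = exp (-12 * credit \<omega> k) * exp (-12 * m)" for m
      by (simp add: algebra_simps flip: exp_add)
    ultimately have "potential \<omega> (Suc k) = E * exp (-12 * min 1 (p * (c + 1)))"
      using True J N power_diff_Suc_Suc[of "progress \<omega> k" T \<rho>] by (simp add: potential_def phase_Suc E_def)
    also have "\<dots> \<le> E * (if \<omega> k then max (exp (-12 * min 1 (p * (c + 1)))) (\<psi> p (c + 1)) else \<psi> p (c + 1))"
      using \<open>0 \<le> E\<close> \<open>\<omega> k\<close> by (intro mult_left_mono) auto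
    finally show ?thesis by (simp add: E_def)
  qed
qed

lemma potential_step:
  "p * potential (fun_upd \<omega> k True) (Suc k) + (1 - p) * potential (fun_upd \<omega> k False) (Suc k)
     \<le> potential \<omega> k"
proof -
  note at_k = progress_fun_upd_self phase_fun_upd_self collects_since_fun_upd_self potential_fun_upd_self
  show ?thesis
  proof (cases "progress \<omega> k < T \<and> collects_since \<omega> k (phase_start \<omega> k)")
    case False
    then have "potential (fun_upd \<omega> k b) (Suc k) = potential \<omega> k" for b
      using potential_Suc_eq_if_idle[of "fun_upd \<omega> k b" k] at_k by simp
    then show ?thesis by (simp add: algebra_simps)
  next
    case True
    define c where "c = real (\<Sum>j\<in>{1..n}. phase_counts \<omega> k j)"
    define E where "E = exp (-12 * credit \<omega> k) * \<rho> ^ (T - 1 - progress \<omega> k)"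
    have "0 \<le> E" "0 \<le> c" using rho_pos by (simp_all add: E_def c_def sum_nonneg)
    have bound: "potential (fun_upd \<omega> k b) (Suc k) \<le>
        E * (if b then max (exp (-12 * min 1 (p * (c + 1)))) (\<psi> p (c + 1)) else \<psi> p (c + 1))" for b
      using potential_Suc_le[of "fun_upd \<omega> k b" k, unfolded at_k] True by (cases b) (simp_all add: E_def c_def)
    have "p * potential (fun_upd \<omega> k True) (Suc k) + (1 - p) * potential (fun_upd \<omega> k False) (Suc k)
        \<le> E * (p * max (exp (-12 * min 1 (p * (c + 1)))) (\<psi> p (c + 1)) + (1 - p) * \<psi> p (c + 1))"
    proof -
      have "p * potential (fun_upd \<omega> k True) (Suc k) \<le> p * (E * max (exp (-12 * min 1 (p * (c + 1)))) (\<psi> p (c + 1)))"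
        using bound[of True] p by (intro mult_left_mono) auto
      moreover have "(1 - p) * potential (fun_upd \<omega> k False) (Suc k) \<le> (1 - p) * (E * \<psi> p (c + 1))"
        using bound[of False] p by (intro mult_left_mono) auto
      ultimately show ?thesis by (simp add: algebra_simps)
    qed
    also have "\<dots> \<le> E * \<psi> p c"
      using psi_step[OF p \<open>0 \<le> c\<close>] \<open>0 \<le> E\<close> by (rule mult_left_mono)
    also have "\<dots> = potential \<omega> k"
      using True by (simp add: potential_def E_def c_def)
    finally show ?thesis .
  qed
qed

definition reaches :: "real \<Rightarrow> nat \<Rightarrow> (nat \<Rightarrow> bool) \<Rightarrow> bool" where
  "reaches t K \<omega> \<longleftrightarrow> (\<exists>k\<le>K. time \<omega> k \<le> t \<and> T \<le> prog (point \<omega> k))"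

lemma reaches_cong_prefix:
  assumes "\<And>i. i < K \<Longrightarrow> \<omega> i = \<omega>' i"
  shows "reaches t K \<omega> = reaches t K \<omega>'"
proof -
  have "time \<omega> k = time \<omega>' k \<and> point \<omega> k = point \<omega>' k" if "k \<le> K" for k
    using that assms by (intro conjI time_cong_prefix point_cong_prefix) auto
  then show ?thesis unfolding reaches_def by auto
qed

lemma reaches_mono: "reaches t K \<omega> \<Longrightarrow> K \<le> K' \<Longrightarrow> reaches t K' \<omega>"
  unfolding reaches_def by (auto intro: order_trans)

lemma potential_ge_if_reaches:
  assumes "reaches t K \<omega>"
  shows "exp (-24 * t / progress_time p \<tau> n) \<le> potential \<omega> K"
proof -
  have F: "0 < progress_time p \<tau> n" using n_pos p(1) tau_pos' by (rule progress_time_pos)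
  obtain k where k: "k \<le> K" "time \<omega> k \<le> t" "T \<le> prog (point \<omega> k)"
    using assms unfolding reaches_def by blast
  then have "potential \<omega> K = exp (-12 * credit \<omega> k)"
    using prog_point_le_progress[of \<omega> k] by (intro potential_frozen) auto
  moreover have "credit \<omega> k \<le> 2 * t / progress_time p \<tau> n"
    using credit_le_time[of \<omega> k] k(2) F by (simp add: field_simps)
  then have "-24 * t / progress_time p \<tau> n \<le> -12 * credit \<omega> k" by simp
  ultimately show ?thesis by simp
qed

lemma measure_reaches_le:
  assumes \<delta>: "0 < \<delta>" and t: "t \<le> 1/24 * progress_time p \<tau> n * (real T / 2 + ln \<delta>)"
  shows "measure (coins p) {\<omega>. reaches t K \<omega>} \<le> \<delta>"
proof -
  define F where "F = progress_time p \<tau> n"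
  have "0 < F" unfolding F_def using n_pos p(1) tau_pos' by (rule progress_time_pos)
  have "exp (-24 * t / F) * measure (coins p) {\<omega>. reaches t K \<omega>} \<le> potential (extend_word []) 0"
    using measure_prefix_event_le_potential[where V = "\<lambda>k \<omega>. potential \<omega> k" and Q = "reaches t K" and K = K,
        OF less_imp_le[OF p(1)] p(2) potential_step potential_nonneg reaches_cong_prefix potential_ge_if_reaches]
    by (simp add: F_def)
  also have "\<dots> \<le> exp (-24 * t / F) * \<delta>"
    unfolding potential_0 using rho_pow_le[OF \<delta> \<open>0 < F\<close>] t by (simp add: F_def mult.commute)
  finally show ?thesis by simp
qed

lemma prog_point_lt_with_high_probability:
  assumes "0 < \<delta>" "t \<le> 1/24 * progress_time p \<tau> n * (real T / 2 + ln \<delta>)"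
  shows "\<exists>E \<in> sets (coins p). 1 - \<delta> \<le> measure (coins p) E \<and>
    (\<forall>\<omega>\<in>E. \<forall>k. time \<omega> k \<le> t \<longrightarrow> prog (point \<omega> k) < T)"
proof -
  interpret prob_space "coins p" by (rule prob_space_coins)
  let ?R = "\<lambda>K. {\<omega>. reaches t K \<omega>}"
  have events: "?R K \<in> events" for K
    by (rule sets_prefix_event[where Q = "reaches t K" and K = K, OF less_imp_le[OF p(1)] p(2) reaches_cong_prefix])
  have "incseq ?R" unfolding incseq_def using reaches_mono by blast
  then have "1 - \<delta> \<le> prob (UNIV - (\<Union>K. ?R K))"
    using prob_compl_UN_incseq_ge[of ?R, OF _ _ measure_reaches_le[OF assms]] events by auto
  moreover have "UNIV - (\<Union>K. ?R K) \<in> events"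
    using sets.compl_sets[of "\<Union>K. ?R K" "coins p"] events by auto
  moreover have "\<forall>\<omega> \<in> UNIV - (\<Union>K. ?R K). \<forall>k. time \<omega> k \<le> t \<longrightarrow> prog (point \<omega> k) < T"
  proof (intro ballI allI impI)
    fix \<omega> k assume "\<omega> \<in> UNIV - (\<Union>K. ?R K)" "time \<omega> k \<le> t"
    then show "prog (point \<omega> k) < T" unfolding reaches_def by force
  qed
  ultimately show ?thesis by blast
qed

end

theorem mainTheorem13:
  fixes T :: nat and n :: nat and p :: real and \<tau> :: "nat \<Rightarrow> real"
    and f :: "real ^ ('n::{finite,linorder}) \<Rightarrow> real"
    and grad :: "real ^ ('n::{finite,linorder}) \<Rightarrow> real ^ ('n::{finite,linorder})"
    and A :: "nat \<Rightarrow> (real ^ ('n::{finite,linorder})) list \<Rightarrow> real \<times> nat \<times> (real ^ ('n::{finite,linorder}))"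
    and \<delta> t :: real
  assumes T_pos: "1 \<le> T" and T_le: "T \<le> CARD('n)"
    and grad: "\<And>x. (f has_derivative (\<lambda>h. grad x \<bullet> h)) (at x)"
    and prog_grad: "\<And>x. prog (grad x) \<le> prog x + 1"
    and n_pos: "1 \<le> n"
    and tau_pos: "0 < \<tau> 1"
    and tau_mono: "\<And>i j. 1 \<le> i \<Longrightarrow> i \<le> j \<Longrightarrow> j \<le> n \<Longrightarrow> \<tau> i \<le> \<tau> j"
    and p: "0 < p" "p \<le> 1"
    and alg: "is_algorithm n A"
    and zero_resp: "\<And>\<omega> k. supp (proto_point A (\<lambda>i. delayed_oracle (\<tau> i) (Gmap grad p)) (0, 0, False) \<omega> k)
        \<subseteq> \<Union> (supp ` set (grads A (\<lambda>i. delayed_oracle (\<tau> i) (Gmap grad p)) (0, 0, False) \<omega> k))"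
    and \<delta>: "0 < \<delta>" "\<delta> \<le> 1"
    and t: "0 \<le> t"
      "t \<le> 1/24 * Min ((\<lambda>m. inverse (\<Sum>i=1..m. 1 / \<tau> i) * (1/p + real m)) ` {1..n})
             * (real T / 2 + ln \<delta>)"
  shows "\<exists>E \<in> sets (PiM UNIV (\<lambda>_::nat. measure_pmf (bernoulli_pmf p))).
     measure (PiM UNIV (\<lambda>_::nat. measure_pmf (bernoulli_pmf p))) E \<ge> 1 - \<delta> \<and>
     (\<forall>\<omega>\<in>E. \<forall>k. proto_time A (\<lambda>i. delayed_oracle (\<tau> i) (Gmap grad p)) (0, 0, False) \<omega> k \<le> t \<longrightarrow>
        prog (proto_point A (\<lambda>i. delayed_oracle (\<tau> i) (Gmap grad p)) (0, 0, False) \<omega> k) < T)"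
proof -
  interpret delayed_oracle_run n T p \<tau> grad A
    by unfold_locales (fact T_pos prog_grad n_pos tau_pos tau_mono p alg zero_resp)+
  show ?thesis
    using prog_point_lt_with_high_probability[OF \<delta>(1) t(2)[folded progress_time_def]] by auto
qed

end
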